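(* Let $S=\{(x_1,x_2)\in\mathbb{R}^2:x_2-x_1^2\ge0\}$, $\tilde S^{o}=\{(x_0,x_1,x_2):x_0x_2-x_1^2\ge0,\ x_0>0\}$, $\tilde S^{c}=\{(x_0,x_1,x_2):x_0x_2-x_1^2\ge0,\ x_0\ge0\}$, and $\tilde G=\{X_0,\ X_0X_2-X_1^2,\ X_0^2+X_1^2+X_2^2-1,\ 1-X_0^2-X_1^2-X_2^2\}$. Then $X_0+X_2>0$ on $\mathrm{conv}(\overline{\tilde S^{o}})\setminus\{0\}$ (so this cone is closed and pointed), $\tilde S^{c}\setminus\overline{\tilde S^{o}}=\{(0,0,x_2):x_2<0\}\neq\emptyset$ (so $S$ is not closed at $\infty$), and $\widetilde{\mathrm{TH}}_k(\tilde G)=\mathbb{R}^2$ for every $k\ge1$; in particular $\bigcap_k\widetilde{\mathrm{TH}}_k(\tilde G)\neq\overline{\mathrm{conv}(S)}=S$.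
   Context: For a finite set $H$ of polynomials, $\mathcal{Q}_k(H)=\{\sum_{j}\sigma_jh_j:h_0=1,\ \sigma_j\text{ sums of squares},\ \deg(\sigma_jh_j)\le2k\}$. $\widetilde{\mathrm{TH}}_k(\tilde G)=\{(x_1,x_2):\tilde l(1,x_1,x_2)\ge0\ \forall\tilde l\in\mathcal{Q}_k(\tilde G)\text{ that is a linear form in }(X_0,X_1,X_2)\text{ or }0\}$. A closed convex cone $K$ is pointed if $K\cap(-K)=\{0\}$; $S$ is closed at $\infty$ if $\overline{\tilde S^{o}}=\tilde S^{c}$. *)

theory Defs
  imports "HOL-Analysis.Analysis"
begin

text \<open>Points of R^3 are triples (x0,x1,x2); polynomials in X0,X1,X2 with real
coefficients are represented by their (faithful, since R is infinite) polynomial functions.\<close>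

type_synonym pt3 = "real \<times> real \<times> real"
type_synonym rpoly3 = "pt3 \<Rightarrow> real"

definition monoms3 :: "nat \<Rightarrow> (nat \<times> nat \<times> nat) set" where
  "monoms3 d = {(a,b,e). a + b + e \<le> d}"

definition deg_le :: "rpoly3 \<Rightarrow> nat \<Rightarrow> bool" where
  "deg_le f d \<longleftrightarrow> (\<exists>c :: nat \<times> nat \<times> nat \<Rightarrow> real.
      f = (\<lambda>(x0,x1,x2). \<Sum>(a,b,e)\<in>monoms3 d. c (a,b,e) * x0^a * x1^b * x2^e))"

definition is_poly3 :: "rpoly3 \<Rightarrow> bool" where
  "is_poly3 f \<longleftrightarrow> (\<exists>d. deg_le f d)"

definition is_sos :: "rpoly3 \<Rightarrow> bool" where
  "is_sos \<sigma> \<longleftrightarrow> (\<exists>ps. (\<forall>p\<in>set ps. is_poly3 p) \<and> \<sigma> = (\<lambda>x. \<Sum>p\<leftarrow>ps. (p x)^2))"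

text \<open>The finite set H is given as a list; h_0 = 1, h_{j+1} = H ! j.\<close>
definition hh :: "rpoly3 list \<Rightarrow> nat \<Rightarrow> rpoly3" where
  "hh H j = (if j = 0 then (\<lambda>_. 1) else H ! (j - 1))"

definition Qmod :: "nat \<Rightarrow> rpoly3 list \<Rightarrow> rpoly3 set" where
  "Qmod k H = {f. \<exists>\<sigma> :: nat \<Rightarrow> rpoly3.
      (\<forall>j\<le>length H. is_sos (\<sigma> j) \<and> deg_le (\<lambda>x. \<sigma> j x * hh H j x) (2 * k)) \<and>
      f = (\<lambda>x. \<Sum>j\<le>length H. \<sigma> j x * hh H j x)}"

definition is_linform :: "rpoly3 \<Rightarrow> bool" where
  "is_linform l \<longleftrightarrow> (\<exists>a b c. l = (\<lambda>(x0,x1,x2). a * x0 + b * x1 + c * x2))"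

definition THk :: "nat \<Rightarrow> rpoly3 list \<Rightarrow> (real \<times> real) set" where
  "THk k G = {(x1,x2). \<forall>l\<in>Qmod k G. is_linform l \<longrightarrow> l (1,x1,x2) \<ge> 0}"

definition pointed :: "'a::real_vector set \<Rightarrow> bool" where
  "pointed K \<longleftrightarrow> K \<inter> uminus ` K = {0}"

definition S2 :: "(real \<times> real) set" where
  "S2 = {(x1,x2). x2 - x1^2 \<ge> 0}"

definition So :: "pt3 set" where
  "So = {(x0,x1,x2). x0 * x2 - x1^2 \<ge> 0 \<and> x0 > 0}"

definition Sc :: "pt3 set" where
  "Sc = {(x0,x1,x2). x0 * x2 - x1^2 \<ge> 0 \<and> x0 \<ge> 0}"

definition closed_at_infinity :: "pt3 set \<Rightarrow> pt3 set \<Rightarrow> bool" where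
  "closed_at_infinity So' Sc' \<longleftrightarrow> closure So' = Sc'"

definition Gt :: "rpoly3 list" where
  "Gt = [(\<lambda>(x0,x1,x2). x0),
         (\<lambda>(x0,x1,x2). x0 * x2 - x1^2),
         (\<lambda>(x0,x1,x2). x0^2 + x1^2 + x2^2 - 1),
         (\<lambda>(x0,x1,x2). 1 - x0^2 - x1^2 - x2^2)]"

end

theory Submission
  imports Defs
begin

text \<open>
The closure of the open homogenization is the cone of positive semidefinite matrices
\<open>[[x0,x1],[x1,x2]]\<close>: it is closed and convex, and its trace \<open>x0 + x2\<close> vanishes only at 0.
The closed homogenization additionally contains the open ray of points \<open>(0,0,x2)\<close> with
\<open>x2 < 0\<close>. Every element of the quadratic module of \<open>G\<close> is nonnegative on the unit
sphere part of the closed homogenization, so a linear form in it is nonnegative on that whole cone; nonnegativity on \<open>(0,0,\<plusminus>1)\<close>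
kills its \<open>X2\<close>-coefficient, and then it is nonnegative at every \<open>(1,x1,x2)\<close>.
\<close>

definition psd2 :: "pt3 set" where
  "psd2 = {(x0, x1, x2). 0 \<le> x0 \<and> 0 \<le> x2 \<and> x1\<^sup>2 \<le> x0 * x2}"

lemma closed_psd2: "closed psd2"
proof -
  have "psd2 = {x. 0 \<le> fst x \<and> 0 \<le> snd (snd x) \<and> (fst (snd x))\<^sup>2 \<le> fst x * snd (snd x)}"
    by (auto simp: psd2_def)
  also have "closed \<dots>"
    by (intro closed_Collect_conj closed_Collect_le continuous_intros)
  finally show ?thesis .
qed

lemma psd2_mixed_term_le:
  fixes u0 u1 u2 v0 v1 v2 :: real
  assumes "0 \<le> u0" "0 \<le> u2" "u1\<^sup>2 \<le> u0 * u2" "0 \<le> v0" "0 \<le> v2" "v1\<^sup>2 \<le> v0 * v2"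
  shows "2 * u1 * v1 \<le> u0 * v2 + v0 * u2"
proof -
  have "(2 * u1 * v1)\<^sup>2 = 4 * (u1\<^sup>2 * v1\<^sup>2)"
    by (simp add: power_mult_distrib)
  also have "\<dots> \<le> 4 * ((u0 * u2) * (v0 * v2))"
    using assms by (intro mult_left_mono mult_mono) auto
  also have "\<dots> \<le> (u0 * v2 + v0 * u2)\<^sup>2"
    using zero_le_power2[of "u0 * v2 - v0 * u2"] by (simp add: power2_eq_square algebra_simps)
  finally have "\<bar>2 * u1 * v1\<bar> \<le> \<bar>u0 * v2 + v0 * u2\<bar>"
    using abs_le_square_iff by blast
  moreover have "0 \<le> u0 * v2 + v0 * u2"
    using assms by simp
  ultimately show ?thesis
    by linarith
qed

lemma psd2_add: "x \<in> psd2 \<Longrightarrow> y \<in> psd2 \<Longrightarrow> x + y \<in> psd2"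
proof (cases x, cases y)
  fix x0 x1 x2 y0 y1 y2 :: real
  assume "x \<in> psd2" "y \<in> psd2" and xy: "x = (x0, x1, x2)" "y = (y0, y1, y2)"
  then have X: "0 \<le> x0" "0 \<le> x2" "x1\<^sup>2 \<le> x0 * x2"
    and Y: "0 \<le> y0" "0 \<le> y2" "y1\<^sup>2 \<le> y0 * y2"
    by (auto simp: psd2_def)
  have "(x0 + y0) * (x2 + y2) - (x1 + y1)\<^sup>2
      = (x0 * x2 - x1\<^sup>2) + (y0 * y2 - y1\<^sup>2) + (x0 * y2 + y0 * x2 - 2 * x1 * y1)"
    by (simp add: algebra_simps power2_eq_square)
  moreover have "2 * x1 * y1 \<le> x0 * y2 + y0 * x2"
    using psd2_mixed_term_le[OF X Y] .
  ultimately show "x + y \<in> psd2"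
    using X Y xy by (simp add: psd2_def)
qed

lemma scaled_square_le: "b\<^sup>2 \<le> a * c \<Longrightarrow> (t * b)\<^sup>2 \<le> (t * a) * (t * (c :: real))"
  using mult_left_mono[of "b\<^sup>2" "a * c" "t\<^sup>2"] by (simp add: power_mult_distrib power2_eq_square mult_ac)

lemma psd2_scaleR: "0 \<le> t \<Longrightarrow> x \<in> psd2 \<Longrightarrow> t *\<^sub>R x \<in> psd2"
  by (cases x) (auto simp: psd2_def scaled_square_le)

lemma convex_psd2: "convex psd2"
  unfolding convex_def by (simp add: psd2_add psd2_scaleR)

lemma psd2_trace_pos:
  assumes "x \<in> psd2" "x \<noteq> 0"
  shows "0 < fst x + snd (snd x)"
proof (cases x)
  case (fields a b c)
  then have h: "0 \<le> a" "0 \<le> c" "b\<^sup>2 \<le> a * c"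
    using assms(1) by (auto simp: psd2_def)
  show ?thesis
  proof (rule ccontr)
    assume "\<not> 0 < fst x + snd (snd x)"
    then have "a = 0" "c = 0"
      using h fields by auto
    then have "b = 0"
      using h by simp
    then show False
      using assms(2) fields \<open>a = 0\<close> \<open>c = 0\<close> by (simp add: zero_prod_def)
  qed
qed

lemma pointed_if_strictly_positive_linear:
  fixes f :: "'a::real_vector \<Rightarrow> real"
  assumes "linear f" "0 \<in> K" "\<And>x. x \<in> K \<Longrightarrow> x \<noteq> 0 \<Longrightarrow> 0 < f x"
  shows "pointed K"
proof -
  have "x = 0" if "x \<in> K" "- x \<in> K" for x
  proof (rule ccontr)
    assume "x \<noteq> 0"
    then have "0 < f x" "0 < f (- x)"
      using assms(3) that by auto
    then show False
      using linear_neg[OF assms(1), of x] by simp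
  qed
  then have "K \<inter> uminus ` K \<subseteq> {0}"
    by (auto simp: image_iff)
  moreover have "0 \<in> K \<inter> uminus ` K"
    using assms(2) by (simp add: image_iff)
  ultimately show ?thesis
    unfolding pointed_def by blast
qed

lemma pointed_psd2: "pointed psd2"
proof (rule pointed_if_strictly_positive_linear)
  show "linear (\<lambda>x::pt3. fst x + snd (snd x))"
    by (intro linear_compose_add linear_fst)
      (rule linear_compose[OF linear_snd linear_snd, unfolded comp_def])
qed (auto simp: psd2_def zero_prod_def psd2_trace_pos)

lemma So_subset_psd2: "So \<subseteq> psd2"
proof
  fix x assume "x \<in> So"
  then obtain a b c where x: "x = (a, b, c)" and h: "b\<^sup>2 \<le> a * c" "0 < a"
    by (auto simp: So_def)
  then have "0 \<le> a * c"
    using zero_le_power2[of b] by linarith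
  then have "0 \<le> c"
    using h(2) by (simp add: zero_le_mult_iff)
  then show "x \<in> psd2"
    using h x by (simp add: psd2_def)
qed

lemma psd2_shift_in_So: "x \<in> psd2 \<Longrightarrow> 0 < t \<Longrightarrow> x + t *\<^sub>R (1, 0, 1) \<in> So"
proof (cases x)
  fix a b c assume "x \<in> psd2" "0 < t" and x: "x = (a, b, c)"
  then have h: "0 \<le> a" "0 \<le> c" "b\<^sup>2 \<le> a * c"
    by (auto simp: psd2_def)
  have "(a + t) * (c + t) - b\<^sup>2 = (a * c - b\<^sup>2) + (a + c) * t + t\<^sup>2"
    by (simp add: algebra_simps power2_eq_square)
  moreover have "0 \<le> (a + c) * t"
    using h \<open>0 < t\<close> by simp
  ultimately have "b\<^sup>2 \<le> (a + t) * (c + t)"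
    using h(3) zero_le_power2[of t] by linarith
  then show ?thesis
    using h \<open>0 < t\<close> x by (simp add: So_def)
qed

lemma psd2_subset_closure_So: "psd2 \<subseteq> closure So"
proof
  fix x assume x: "x \<in> psd2"
  let ?f = "\<lambda>n. x + (1 / real (Suc n)) *\<^sub>R (1, 0, 1 :: real)"
  have "(\<lambda>n. 1 / real (Suc n)) \<longlonglongrightarrow> 0"
    by (rule LIMSEQ_Suc[OF lim_const_over_n])
  then have "?f \<longlonglongrightarrow> x + 0 *\<^sub>R (1, 0, 1)"
    by (intro tendsto_add tendsto_const tendsto_scaleR)
  then have "?f \<longlonglongrightarrow> x"
    by (simp only: scale_zero_left add.right_neutral)
  moreover have "?f n \<in> So" for n
    using psd2_shift_in_So[OF x] by simp
  ultimately show "x \<in> closure So"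
    by (meson closure_sequential)
qed

lemma closure_So: "closure So = psd2"
  using So_subset_psd2 psd2_subset_closure_So closed_psd2
  by (meson closure_minimal subset_antisym)

lemma Sc_minus_psd2: "Sc - psd2 = {(0, 0, x2) | x2. x2 < 0}"
proof (intro subset_antisym subsetI)
  fix x assume x: "x \<in> Sc - psd2"
  obtain a b c where e: "x = (a, b, c)"
    by (cases x)
  then have h: "0 \<le> a" "b\<^sup>2 \<le> a * c" "c < 0"
    using x by (auto simp: Sc_def psd2_def)
  then have "a * c \<le> 0"
    by (simp add: mult_nonneg_nonpos)
  then have "b\<^sup>2 \<le> 0" "a * c = 0"
    using h(2) zero_le_power2[of b] by linarith+
  then have "b = 0"
    by simp
  have "a = 0"
    using \<open>a * c = 0\<close> h(3) by simp
  then show "x \<in> {(0, 0, x2) | x2. x2 < 0}"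
    using e h \<open>b = 0\<close> by auto
qed (auto simp: Sc_def psd2_def)

lemma Sc_scaleR: "0 \<le> t \<Longrightarrow> x \<in> Sc \<Longrightarrow> t *\<^sub>R x \<in> Sc"
  by (cases x) (auto simp: Sc_def scaled_square_le)

lemma sos_nonneg: "is_sos \<sigma> \<Longrightarrow> 0 \<le> \<sigma> x"
  unfolding is_sos_def by (auto intro!: sum_list_nonneg)

lemma Qmod_nonneg:
  assumes "f \<in> Qmod k H" and "\<And>j. j \<le> length H \<Longrightarrow> 0 \<le> hh H j x"
  shows "0 \<le> f x"
proof -
  obtain \<sigma> where "\<forall>j\<le>length H. is_sos (\<sigma> j)" and "f = (\<lambda>x. \<Sum>j\<le>length H. \<sigma> j x * hh H j x)"
    using assms(1) unfolding Qmod_def by blast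
  moreover have "0 \<le> \<sigma> j x * hh H j x" if "j \<le> length H" for j
    using that calculation(1) assms(2) sos_nonneg by (simp add: mult_nonneg_nonneg)
  ultimately show ?thesis
    by (auto intro: sum_nonneg)
qed

lemma Gt_nonneg: "x \<in> Sc \<Longrightarrow> norm x = 1 \<Longrightarrow> j \<le> length Gt \<Longrightarrow> 0 \<le> hh Gt j x"
proof (cases x)
  fix a b c assume "x \<in> Sc" "norm x = 1" "j \<le> length Gt" and x: "x = (a, b, c)"
  then have "0 \<le> a" "b\<^sup>2 \<le> a * c" "a\<^sup>2 + b\<^sup>2 + c\<^sup>2 = 1" "j \<in> {0, 1, 2, 3, 4}"
    using power2_norm_eq_inner[of x] by (auto simp: Sc_def norm_Pair Gt_def)
  then show ?thesis
    using x by (auto simp: hh_def Gt_def)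
qed

lemma linform_scaleR: "is_linform l \<Longrightarrow> l (t *\<^sub>R x) = t * l x"
  by (cases x) (auto simp: is_linform_def algebra_simps)

text \<open>The sphere constraints of \<open>G\<close> only see the unit sphere; homogeneity of a linear form
carries nonnegativity from there to the whole cone.\<close>
lemma Qmod_Gt_linform_nonneg_on_Sc:
  assumes l: "l \<in> Qmod k Gt" "is_linform l" and x: "x \<in> Sc"
  shows "0 \<le> l x"
proof (cases "x = 0")
  case True
  then show ?thesis
    using linform_scaleR[OF l(2), of 0 x] by simp
next
  case False
  let ?u = "x /\<^sub>R norm x"
  have "?u \<in> Sc"
    using Sc_scaleR[OF _ x, of "inverse (norm x)"] by simp
  moreover have "norm ?u = 1"
    using False by simp
  ultimately have "0 \<le> l ?u"
    by (intro Qmod_nonneg[OF l(1)] Gt_nonneg)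
  then show ?thesis
    using linform_scaleR[OF l(2), of "norm x" ?u] False by simp
qed

lemma THk_Gt: "THk k Gt = UNIV"
proof -
  have "0 \<le> l (1, x1, x2)" if l: "l \<in> Qmod k Gt" "is_linform l" for l x1 x2
  proof -
    obtain a b c where le: "l = (\<lambda>(x0, x1, x2). a * x0 + b * x1 + c * x2)"
      using l(2) unfolding is_linform_def by blast
    have "0 \<le> l (0, 0, 1)" "0 \<le> l (0, 0, -1)" "0 \<le> l (1, x1, x1\<^sup>2)"
      by (intro Qmod_Gt_linform_nonneg_on_Sc[OF l]; simp add: Sc_def)+
    then show ?thesis
      by (simp add: le)
  qed
  then show ?thesis
    unfolding THk_def by auto
qed

lemma convex_S2: "convex S2"
  unfolding convex_def
proof (intro ballI allI impI)
  fix x y :: "real \<times> real" and u v :: real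
  assume "x \<in> S2" "y \<in> S2" and uv: "0 \<le> u" "0 \<le> v" "u + v = 1"
  have v: "v = 1 - u"
    using uv(3) by simp
  obtain x1 x2 y1 y2 where xy: "x = (x1, x2)" "y = (y1, y2)"
    by fastforce
  then have "x1\<^sup>2 \<le> x2" "y1\<^sup>2 \<le> y2"
    using \<open>x \<in> S2\<close> \<open>y \<in> S2\<close> by (auto simp: S2_def)
  then have "u * x1\<^sup>2 + v * y1\<^sup>2 \<le> u * x2 + v * y2"
    using uv by (intro add_mono mult_left_mono) auto
  moreover have "u * x1\<^sup>2 + v * y1\<^sup>2 - (u * x1 + v * y1)\<^sup>2 = u * v * (x1 - y1)\<^sup>2"
    unfolding v by (simp add: algebra_simps power2_eq_square)
  moreover have "0 \<le> u * v * (x1 - y1)\<^sup>2"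
    using uv by simp
  ultimately show "u *\<^sub>R x + v *\<^sub>R y \<in> S2"
    by (simp add: S2_def xy)
qed

lemma closed_S2: "closed S2"
proof -
  have "S2 = {x. (fst x)\<^sup>2 \<le> snd x}"
    by (auto simp: S2_def)
  also have "closed \<dots>"
    by (intro closed_Collect_le continuous_intros)
  finally show ?thesis .
qed

lemma closure_convex_hull_S2: "closure (convex hull S2) = S2"
  by (simp add: convex_S2 closed_S2 convex_hull_eq[THEN iffD2] closure_closed)

theorem mainTheorem18:
  shows "(\<forall>x\<in>convex hull (closure So) - {0}. fst x + snd (snd x) > 0)
    \<and> closed (convex hull (closure So)) \<and> pointed (convex hull (closure So))
    \<and> Sc - closure So = {(0, 0, x2) | x2. x2 < 0}
    \<and> Sc - closure So \<noteq> {}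
    \<and> \<not> closed_at_infinity So Sc
    \<and> (\<forall>k\<ge>1. THk k Gt = UNIV)
    \<and> (\<Inter>k\<in>{1..}. THk k Gt) \<noteq> closure (convex hull S2)
    \<and> closure (convex hull S2) = S2"
proof -
  have hull: "convex hull (closure So) = psd2"
    by (simp add: closure_So convex_psd2 convex_hull_eq[THEN iffD2])
  have gap: "Sc - closure So \<noteq> {}"
    unfolding closure_So Sc_minus_psd2 by (auto intro: exI[of _ "-1"])
  then have "\<not> closed_at_infinity So Sc"
    unfolding closed_at_infinity_def by blast
  have "(0, -1) \<notin> S2"
    by (simp add: S2_def)
  then have relaxation_gap: "(\<Inter>k\<in>{1..}. THk k Gt) \<noteq> S2"
    by (auto simp: THk_Gt)
  show ?thesis
    using gap \<open>\<not> closed_at_infinity So Sc\<close> relaxation_gap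
    unfolding hull closure_convex_hull_S2
    by (auto simp: closure_So psd2_trace_pos closed_psd2 pointed_psd2 Sc_minus_psd2 THk_Gt)
qed

end
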